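(* Let $X$ be a nonempty set, $F:X\rightrightarrows Y$ with $F(x)\in\mathcal P^0_{\mp C}(Y)$ for all $x$, $\mp C$-closed and $\mp C$-bounded valued, let $e\in-\mathrm{int}(C)$, and assume $v_e(F(x))\neq v_e(F(y))$ for all $x,y\in X$ with $x\neq y$. If $x_0\in X$ is a maximal (resp. minimal) solution of the vector problem of maximizing (resp. minimizing) $v_e(F(x))$ over $x\in X$, then $x_0$ is an $s$-maximal (resp. $s$-minimal) solution of $(s\text{-}SOP)$.
   Context: $Y$ is a real topological linear space and $C\subset Y$ is a convex, closed, pointed cone with nonempty interior. $\mathbb R^2$ is ordered by $\mathbb R^2_+$. $\mathcal P^0_{\mp C}(Y)$ is the family of nonempty $A\subset Y$ with $A+C\neq Y$ and $A-C\neq Y$. $C$-closed: $A+C$ closed; $C$-bounded: for every neighborhood $U$ of $0$ there is $t>0$ with $A\subset tU+C$; $\mp C$-closed/bounded: holds for $C$ and $-C$. $A\preceq^s B$ iff $B\subset A+C$ and $A\subset B-C$. $x_0$ is an $s$-maximal (minimal) solution of $(s\text{-}SOP)$ if for every $x\in X$, $F(x_0)\preceq^sF(x)$ implies $F(x)\preceq^sF(x_0)$ (resp. $F(x)\preceq^sF(x_0)$ implies $F(x_0)\preceq^sF(x)$). For $e\in-\mathrm{int}(C)$: $\phi_{e,A}(y)=\inf\{t\in\mathbb R: y\in te+A+C\}$; $G^\ell_e(A,B)=\sup_{b\in B}\phi_{e,A}(b)$; $G^u_e(B,A):=-G^\ell_e(-B,-A)$; $v_e(A)=\big(-G^\ell_e(\{0\},A),\,G^u_e(A,\{0\})\big)$.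 For $f:X\to\mathbb R^2$, $\bar x$ is a maximal solution of $\max f$ if there is no $x$ with $f(\bar x)\le_{\mathbb R^2_+}f(x)$, $f(x)\ne f(\bar x)$; a minimal solution of $\min f$ if there is no $x$ with $f(x)\le_{\mathbb R^2_+}f(\bar x)$, $f(x)\ne f(\bar x)$. *)

theory Defs
  imports "HOL-Analysis.Analysis"
begin

definition topological_linear_space :: "('y::{real_vector,topological_space}) itself \<Rightarrow> bool" where
  "topological_linear_space _ \<longleftrightarrow>
     continuous_on UNIV (\<lambda>p::'y \<times> 'y. fst p + snd p) \<and>
     continuous_on UNIV (\<lambda>p::real \<times> 'y. fst p *\<^sub>R snd p)"

definition msum :: "'y::real_vector set \<Rightarrow> 'y set \<Rightarrow> 'y set" where
  "msum A B = {a + b | a b. a \<in> A \<and> b \<in> B}"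

definition mdiff :: "'y::real_vector set \<Rightarrow> 'y set \<Rightarrow> 'y set" where
  "mdiff A B = {a - b | a b. a \<in> A \<and> b \<in> B}"

definition P0 :: "'y::real_vector set \<Rightarrow> 'y set set" where
  "P0 C = {A. A \<noteq> {} \<and> msum A C \<noteq> UNIV \<and> mdiff A C \<noteq> UNIV}"

definition mpC_closed :: "'y::{real_vector,topological_space} set \<Rightarrow> 'y set \<Rightarrow> bool" where
  "mpC_closed C A \<longleftrightarrow> closed (msum A C) \<and> closed (mdiff A C)"

definition neighborhood0 :: "'y::{real_vector,topological_space} set \<Rightarrow> bool" where
  "neighborhood0 U \<longleftrightarrow> (\<exists>V. open V \<and> 0 \<in> V \<and> V \<subseteq> U)"

definition mpC_bounded :: "'y::{real_vector,topological_space} set \<Rightarrow> 'y set \<Rightarrow> bool" where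
  "mpC_bounded C A \<longleftrightarrow>
     (\<forall>U. neighborhood0 U \<longrightarrow> (\<exists>t>0. A \<subseteq> msum ((\<lambda>u. t *\<^sub>R u) ` U) C)) \<and>
     (\<forall>U. neighborhood0 U \<longrightarrow> (\<exists>t>0. A \<subseteq> mdiff ((\<lambda>u. t *\<^sub>R u) ` U) C))"

definition set_less_s :: "'y::real_vector set \<Rightarrow> 'y set \<Rightarrow> 'y set \<Rightarrow> bool" where
  "set_less_s C A B \<longleftrightarrow> B \<subseteq> msum A C \<and> A \<subseteq> mdiff B C"

definition s_maximal :: "'y::real_vector set \<Rightarrow> 'x set \<Rightarrow> ('x \<Rightarrow> 'y set) \<Rightarrow> 'x \<Rightarrow> bool" where
  "s_maximal C X F x0 \<longleftrightarrow> x0 \<in> X \<and>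
     (\<forall>x\<in>X. set_less_s C (F x0) (F x) \<longrightarrow> set_less_s C (F x) (F x0))"

definition s_minimal :: "'y::real_vector set \<Rightarrow> 'x set \<Rightarrow> ('x \<Rightarrow> 'y set) \<Rightarrow> 'x \<Rightarrow> bool" where
  "s_minimal C X F x0 \<longleftrightarrow> x0 \<in> X \<and>
     (\<forall>x\<in>X. set_less_s C (F x) (F x0) \<longrightarrow> set_less_s C (F x0) (F x))"

text \<open>Scalarization functional (extended-real valued, inf of the empty set is \<open>+\<infinity>\<close>).\<close>
definition phi :: "'y::real_vector set \<Rightarrow> 'y \<Rightarrow> 'y set \<Rightarrow> 'y \<Rightarrow> ereal" where
  "phi C e A y = Inf {ereal t | t. y \<in> msum ((\<lambda>a. t *\<^sub>R e + a) ` A) C}"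

definition Gl :: "'y::real_vector set \<Rightarrow> 'y \<Rightarrow> 'y set \<Rightarrow> 'y set \<Rightarrow> ereal" where
  "Gl C e A B = (SUP b\<in>B. phi C e A b)"

definition Gu :: "'y::real_vector set \<Rightarrow> 'y \<Rightarrow> 'y set \<Rightarrow> 'y set \<Rightarrow> ereal" where
  "Gu C e B A = - Gl C e (uminus ` B) (uminus ` A)"

definition ve :: "'y::real_vector set \<Rightarrow> 'y \<Rightarrow> 'y set \<Rightarrow> ereal \<times> ereal" where
  "ve C e A = (- Gl C e {0} A, Gu C e A {0})"

definition le2 :: "ereal \<times> ereal \<Rightarrow> ereal \<times> ereal \<Rightarrow> bool" where
  "le2 p q \<longleftrightarrow> fst p \<le> fst q \<and> snd p \<le> snd q"

definition vec_maximal :: "'x set \<Rightarrow> ('x \<Rightarrow> ereal \<times> ereal) \<Rightarrow> 'x \<Rightarrow> bool" where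
  "vec_maximal X f x0 \<longleftrightarrow> x0 \<in> X \<and> \<not> (\<exists>x\<in>X. le2 (f x0) (f x) \<and> f x \<noteq> f x0)"

definition vec_minimal :: "'x set \<Rightarrow> ('x \<Rightarrow> ereal \<times> ereal) \<Rightarrow> 'x \<Rightarrow> bool" where
  "vec_minimal X f x0 \<longleftrightarrow> x0 \<in> X \<and> \<not> (\<exists>x\<in>X. le2 (f x) (f x0) \<and> f x \<noteq> f x0)"

end

theory Submission
  imports Defs
begin

text \<open>The map \<open>v\<^sub>e\<close> is monotone with respect to \<open>\<preceq>\<^sup>s\<close>: enlarging a set
  by \<open>C\<close> from above or below can only lower \<open>G\<^sup>\<ell>\<^sub>e({0}, \<cdot>)\<close> and raise \<open>G\<^sup>u\<^sub>e(\<cdot>, {0})\<close>, because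
  the scalarization \<open>\<phi>\<^sub>e\<^sub>,\<^sub>A\<close> decreases along \<open>C\<close> and as \<open>A\<close> grows by \<open>C\<close>. Hence
  \<open>F(x\<^sub>0) \<preceq>\<^sup>s F(x)\<close> gives \<open>v\<^sub>e(F(x\<^sub>0)) \<le> v\<^sub>e(F(x))\<close>; vector maximality of \<open>x\<^sub>0\<close> forces equality,
  injectivity of \<open>v\<^sub>e \<circ> F\<close> forces \<open>x = x\<^sub>0\<close>, and \<open>\<preceq>\<^sup>s\<close> is reflexive.\<close>

lemma msum_add_closed:
  assumes C_add: "\<forall>x\<in>C. \<forall>y\<in>C. x + y \<in> C"
    and "y \<in> msum S C" "c \<in> C"
  shows "y + c \<in> msum S C"
proof -
  obtain s c' where "s \<in> S" "c' \<in> C" "y = s + c'"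
    using assms(2) unfolding msum_def by auto
  then have "y + c = s + (c' + c)" "c' + c \<in> C"
    using C_add \<open>c \<in> C\<close> by (simp_all add: add.assoc)
  with \<open>s \<in> S\<close> show ?thesis
    unfolding msum_def by blast
qed

lemma msum_absorb:
  assumes C_add: "\<forall>x\<in>C. \<forall>y\<in>C. x + y \<in> C"
    and "S' \<subseteq> msum S C"
  shows "msum S' C \<subseteq> msum S C"
  using assms msum_add_closed[OF C_add] unfolding msum_def[of S' C] by blast

lemma msum_translate_subset:
  assumes "S' \<subseteq> msum S C"
  shows "(\<lambda>a. v + a) ` S' \<subseteq> msum ((\<lambda>a. v + a) ` S) C"
proof
  fix y assume "y \<in> (\<lambda>a. v + a) ` S'"
  then obtain s c where "s \<in> S" "c \<in> C" "y = (v + s) + c"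
    using assms unfolding msum_def by (auto simp: add.assoc)
  then show "y \<in> msum ((\<lambda>a. v + a) ` S) C"
    unfolding msum_def by blast
qed

lemma phi_add_closed:
  assumes C_add: "\<forall>x\<in>C. \<forall>y\<in>C. x + y \<in> C" and "c \<in> C"
  shows "phi C e S (y + c) \<le> phi C e S y"
  unfolding phi_def
  by (rule Inf_superset_mono) (use msum_add_closed[OF C_add _ \<open>c \<in> C\<close>] in blast)

lemma phi_antimono:
  assumes C_add: "\<forall>x\<in>C. \<forall>y\<in>C. x + y \<in> C" and "S' \<subseteq> msum S C"
  shows "phi C e S y \<le> phi C e S' y"
  unfolding phi_def
  by (rule Inf_superset_mono)
     (use msum_absorb[OF C_add msum_translate_subset[OF \<open>S' \<subseteq> msum S C\<close>]] in blast)

lemma Gl_antimono_right: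
  assumes C_add: "\<forall>x\<in>C. \<forall>y\<in>C. x + y \<in> C" and "B \<subseteq> msum A C"
  shows "Gl C e S B \<le> Gl C e S A"
  unfolding Gl_def
proof (rule SUP_least)
  fix b assume "b \<in> B"
  then obtain a c where "a \<in> A" "c \<in> C" "b = a + c"
    using assms(2) unfolding msum_def by auto
  then have "phi C e S b \<le> phi C e S a"
    using phi_add_closed[OF C_add] by blast
  also have "\<dots> \<le> (SUP a\<in>A. phi C e S a)"
    using \<open>a \<in> A\<close> by (rule SUP_upper)
  finally show "phi C e S b \<le> (SUP a\<in>A. phi C e S a)" .
qed

lemma Gl_antimono_left:
  assumes C_add: "\<forall>x\<in>C. \<forall>y\<in>C. x + y \<in> C" and "S' \<subseteq> msum S C"
  shows "Gl C e S T \<le> Gl C e S' T"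
  unfolding Gl_def using phi_antimono[OF assms] by (rule SUP_mono')

lemma uminus_mdiff: "uminus ` mdiff B C = msum (uminus ` B) C"
  unfolding mdiff_def msum_def by force

lemma Gu_mono:
  assumes C_add: "\<forall>x\<in>C. \<forall>y\<in>C. x + y \<in> C" and "A \<subseteq> mdiff B C"
  shows "Gu C e A T \<le> Gu C e B T"
proof -
  have "uminus ` A \<subseteq> msum (uminus ` B) C"
    using image_mono[OF \<open>A \<subseteq> mdiff B C\<close>, of uminus] by (simp add: uminus_mdiff)
  then have "Gl C e (uminus ` B) (uminus ` T) \<le> Gl C e (uminus ` A) (uminus ` T)"
    by (rule Gl_antimono_left[OF C_add])
  then show ?thesis
    unfolding Gu_def by simp
qed

lemma ve_mono:
  assumes "convex C" "cone C" and "set_less_s C A B"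
  shows "le2 (ve C e A) (ve C e B)"
proof -
  have C_add: "\<forall>x\<in>C. \<forall>y\<in>C. x + y \<in> C"
    using assms(1,2) convex_cone by blast
  have "B \<subseteq> msum A C" "A \<subseteq> mdiff B C"
    using assms(3) unfolding set_less_s_def by auto
  then show ?thesis
    using Gl_antimono_right[OF C_add] Gu_mono[OF C_add]
    unfolding le2_def ve_def by simp
qed

lemma set_less_s_refl:
  assumes "0 \<in> C"
  shows "set_less_s C A A"
  unfolding set_less_s_def msum_def mdiff_def using assms by force

theorem theorem9:
  fixes X :: "'x set" and F :: "'x \<Rightarrow> 'y::{real_vector,topological_space} set"
    and C :: "'y set" and e :: 'y and x0 :: 'x
  assumes tvs: "topological_linear_space TYPE('y)"
    and C_convex: "convex C" and C_closed: "closed C" and C_cone: "cone C"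
    and C_pointed: "C \<inter> uminus ` C = {0}" and C_int: "interior C \<noteq> {}"
    and X_ne: "X \<noteq> {}"
    and F_P0: "\<forall>x\<in>X. F x \<in> P0 C"
    and F_closed: "\<forall>x\<in>X. mpC_closed C (F x)"
    and F_bounded: "\<forall>x\<in>X. mpC_bounded C (F x)"
    and e_in: "e \<in> uminus ` interior C"
    and v_inj: "\<forall>x\<in>X. \<forall>y\<in>X. x \<noteq> y \<longrightarrow> ve C e (F x) \<noteq> ve C e (F y)"
  shows "(vec_maximal X (\<lambda>x. ve C e (F x)) x0 \<longrightarrow> s_maximal C X F x0) \<and>
         (vec_minimal X (\<lambda>x. ve C e (F x)) x0 \<longrightarrow> s_minimal C X F x0)"
proof -
  have mono: "\<And>A B. set_less_s C A B \<Longrightarrow> le2 (ve C e A) (ve C e B)"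
    using ve_mono[OF C_convex C_cone] .
  have refl: "\<And>A. set_less_s C A A"
    using set_less_s_refl C_pointed by blast
  show ?thesis
    unfolding vec_maximal_def vec_minimal_def s_maximal_def s_minimal_def
    using mono refl v_inj by metis
qed

end
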